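(* Let $\mathscr{H}$ be a complex Hilbert space and $A\in\mathbb{B}(\mathscr{H})$. Then for every $\mu\in[0,2]$, $$w^2(A)\leq\frac{1}{4}\left\|\mu|A|^2+(2-\mu)|A^*|^2\right\|+\frac{1}{8}\left\||A|^2+|A^*|^2\right\|+\frac{1}{4}\,w(A^2).$$
   Context: $\mathbb{B}(\mathscr{H})$ denotes the algebra of bounded linear operators on $\mathscr{H}$; $\|\cdot\|$ is the operator norm. For $T\in\mathbb{B}(\mathscr{H})$, $|T|=(T^*T)^{1/2}$, and $w(T)=\sup\{|\langle Tx,x\rangle|: \|x\|=1\}$ is the numerical radius. *)

theory Defs
  imports "HOL-Analysis.Analysis"
begin

text \<open>A complex Hilbert space is a type of sort {cinner_space, complete_space}.
The complex inner product is linear in the first argument.\<close>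

class cinner_space = real_inner +
  fixes scaleC :: "complex \<Rightarrow> 'a \<Rightarrow> 'a"
  fixes cinner :: "'a \<Rightarrow> 'a \<Rightarrow> complex"
  assumes scaleC_add_right: "scaleC a (x + y) = scaleC a x + scaleC a y"
  and scaleC_add_left: "scaleC (a + b) x = scaleC a x + scaleC b x"
  and scaleC_scaleC: "scaleC a (scaleC b x) = scaleC (a * b) x"
  and scaleC_of_real: "scaleC (complex_of_real r) x = scaleR r x"
  and cinner_add_left: "cinner (x + y) z = cinner x z + cinner y z"
  and cinner_scaleC_left: "cinner (scaleC a x) y = a * cinner x y"
  and cinner_commute: "cinner y x = cnj (cinner x y)"
  and inner_cinner: "inner x y = Re (cinner x y)"

definition cbounded :: "('a::cinner_space \<Rightarrow> 'a) \<Rightarrow> bool" where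
  "cbounded T \<longleftrightarrow> bounded_linear T \<and> (\<forall>c x. T (scaleC c x) = scaleC c (T x))"

definition adj :: "('a::cinner_space \<Rightarrow> 'a) \<Rightarrow> ('a \<Rightarrow> 'a)" where
  "adj T = (THE S. \<forall>x y. cinner (T x) y = cinner x (S y))"

text \<open>Numerical radius (0 is inserted so that the trivial space gives 0).\<close>
definition nrad :: "('a::cinner_space \<Rightarrow> 'a) \<Rightarrow> real" where
  "nrad T = Sup (insert 0 {cmod (cinner (T x) x) | x. norm x = 1})"

end

theory Submission
  imports Defs
begin

text \<open>
  Fix a unit vector \<open>x\<close> and put \<open>c = \<langle>Ax, x\<rangle>\<close>. The vector \<open>2c x - Ax\<close> has the same
  norm as \<open>Ax\<close>, and its inner product with \<open>A\<^sup>*x\<close> is \<open>2c\<^sup>2 - \<langle>A\<^sup>2x, x\<rangle>\<close>. Hence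
  \<open>2|c|\<^sup>2 \<le> \<parallel>Ax\<parallel> \<parallel>A\<^sup>*x\<parallel> + |\<langle>A\<^sup>2x, x\<rangle>|\<close>, and by AM-GM the first summand is at most
  \<open>\<langle>(|A|\<^sup>2 + |A\<^sup>*|\<^sup>2)x, x\<rangle>/2\<close>. On the other hand \<open>\<parallel>Ax\<parallel>\<^sup>2 = \<langle>|A|\<^sup>2x, x\<rangle>\<close> and
  \<open>\<parallel>A\<^sup>*x\<parallel>\<^sup>2 = \<langle>|A\<^sup>*|\<^sup>2x, x\<rangle>\<close> both dominate \<open>|c|\<^sup>2\<close>, so
  \<open>2|c|\<^sup>2 \<le> \<langle>(\<mu>|A|\<^sup>2 + (2 - \<mu>)|A\<^sup>*|\<^sup>2)x, x\<rangle>\<close>. Adding the two estimates and taking the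
  supremum over \<open>x\<close> gives the theorem. The existence of the adjoint is the Riesz
  representation theorem, obtained from the vector of minimal norm in a closed hyperplane.
\<close>

lemma cinner_scaleC_right: "cinner (x::'a::cinner_space) (scaleC a y) = cnj a * cinner x y"
  by (metis cinner_scaleC_left cinner_commute complex_cnj_mult)

lemma cinner_scaleR_left: "cinner (r *\<^sub>R (x::'a::cinner_space)) y = of_real r * cinner x y"
  by (metis cinner_scaleC_left scaleC_of_real)

lemma cinner_diff_left: "cinner ((x::'a::cinner_space) - z) y = cinner x y - cinner z y"
  using cinner_add_left[of x "-z" y] cinner_scaleR_left[of "-1" z y] by simp

lemma cinner_diff_right: "cinner (x::'a::cinner_space) (y - z) = cinner x y - cinner x z"
  by (metis cinner_diff_left cinner_commute complex_cnj_diff)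

lemma cinner_self: "cinner (x::'a::cinner_space) x = of_real ((norm x)\<^sup>2)"
proof (rule complex_eqI)
  show "Re (cinner x x) = Re (of_real ((norm x)\<^sup>2))"
    by (simp add: inner_cinner[symmetric] power2_norm_eq_inner)
  have "Im (cinner x x) = 0"
    by (metis cinner_commute Reals_cnj_iff complex_is_Real_iff)
  then show "Im (cinner x x) = Im (of_real ((norm x)\<^sup>2))" by simp
qed

lemma norm_scaleC: "norm (scaleC a (x::'a::cinner_space)) = cmod a * norm x"
proof -
  have "(norm (scaleC a x))\<^sup>2 = Re (cnj a * a * cinner x x)"
    by (simp only: power2_norm_eq_inner inner_cinner cinner_scaleC_left cinner_scaleC_right
        mult.assoc)
  also have "\<dots> = (cmod a * norm x)\<^sup>2"
    by (simp only: cinner_self mult.commute[of "cnj a" a] complex_norm_square[symmetric]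
        of_real_mult[symmetric] Re_complex_of_real power_mult_distrib)
  finally show ?thesis
    by simp
qed

lemma cinner_Cauchy_Schwarz: "cmod (cinner (x::'a::cinner_space) y) \<le> norm x * norm y"
proof (cases "cinner x y = 0")
  case False
  define c where "c = cinner x y"
  define w where "w = cnj c / of_real (cmod c)"
  have "cmod w = 1"
    using False by (simp add: w_def c_def norm_divide)
  have "w * c = of_real (cmod c)"
    using False by (simp add: w_def c_def complex_norm_square[symmetric] power2_eq_square mult.commute)
  then have "cmod c = inner (scaleC w x) y"
    by (simp add: inner_cinner cinner_scaleC_left c_def)
  also have "\<dots> \<le> norm (scaleC w x) * norm y"
    by (rule norm_cauchy_schwarz)
  also have "\<dots> = norm x * norm y"
    by (simp add: norm_scaleC \<open>cmod w = 1\<close>)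
  finally show ?thesis by (simp add: c_def)
qed simp

text \<open>\<open>Im \<langle>x, y\<rangle> = -Re \<langle>\<i>x, y\<rangle>\<close>\<close>
lemma cinner_eq_if_inner_eq:
  fixes x y x' y' :: "'a::cinner_space"
  assumes "inner x y = inner x' y'"
    and "inner (scaleC \<i> x) y = inner (scaleC \<i> x') y'"
  shows "cinner x y = cinner x' y'"
  using assms by (intro complex_eqI) (simp_all add: inner_cinner cinner_scaleC_left)

section \<open>The Riesz representation theorem\<close>

lemma Cauchy_if_dist_le:
  fixes x :: "nat \<Rightarrow> 'a::metric_space"
  assumes "\<epsilon> \<longlonglongrightarrow> 0" and "\<And>m n. dist (x m) (x n) \<le> \<epsilon> m + \<epsilon> n"
  shows "Cauchy x"
proof (rule metric_CauchyI)
  fix e :: real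
  assume "e > 0"
  then obtain M where "\<And>n. n \<ge> M \<Longrightarrow> \<epsilon> n < e/2"
    using order_tendstoD(2)[OF assms(1), of "e/2"] by (auto simp: eventually_sequentially)
  then show "\<exists>M. \<forall>m\<ge>M. \<forall>n\<ge>M. dist (x m) (x n) < e"
    using assms(2) by (smt (verit, best) field_sum_of_halves)
qed

text \<open>By the parallelogram law a minimizing sequence is Cauchy.\<close>
lemma closed_convex_has_min_norm:
  fixes S :: "'a::{real_inner, complete_space} set"
  assumes "closed S" "convex S" "S \<noteq> {}"
  obtains x0 where "x0 \<in> S" "\<And>y. y \<in> S \<Longrightarrow> norm x0 \<le> norm y"
proof -
  define D where "D = Inf ((\<lambda>y. (norm y)\<^sup>2) ` S)"
  have bdd: "bdd_below ((\<lambda>y. (norm y)\<^sup>2) ` S)"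
    by (auto intro: bdd_belowI[of _ 0])
  have D_le: "D \<le> (norm y)\<^sup>2" if "y \<in> S" for y
    unfolding D_def using that by (auto intro: cInf_lower[OF _ bdd])
  have "\<forall>n. \<exists>y\<in>S. (norm y)\<^sup>2 < D + inverse (real (Suc n))"
    using cInf_lessD[of "(\<lambda>y. (norm y)\<^sup>2) ` S" "D + inverse (real (Suc n))" for n]
      \<open>S \<noteq> {}\<close> by (auto simp: D_def)
  then obtain x where x_in: "\<And>n. x n \<in> S"
    and x_small: "\<And>n. (norm (x n))\<^sup>2 < D + inverse (real (Suc n))"
    by metis
  define \<epsilon> where "\<epsilon> n = sqrt (2 * inverse (real (Suc n)))" for n
  have "dist (x m) (x n) \<le> \<epsilon> m + \<epsilon> n" for m n
  proof -
    have "(1/2) *\<^sub>R (x m + x n) \<in> S"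
      using \<open>convex S\<close> x_in[of m] x_in[of n]
      by (simp add: convex_def scaleR_add_right)
    then have "4 * D \<le> (norm (x m + x n))\<^sup>2"
      using D_le by (fastforce simp: power2_eq_square)
    moreover have "(norm (x m - x n))\<^sup>2 + (norm (x m + x n))\<^sup>2
        = 2 * (norm (x m))\<^sup>2 + 2 * (norm (x n))\<^sup>2"
      by (simp add: power2_norm_eq_inner inner_add_left inner_add_right inner_diff_left
          inner_diff_right inner_commute)
    ultimately have "(norm (x m - x n))\<^sup>2 \<le> 2 * inverse (real (Suc m)) + 2 * inverse (real (Suc n))"
      using x_small[of m] x_small[of n] by linarith
    then have "dist (x m) (x n) \<le> sqrt (2 * inverse (real (Suc m)) + 2 * inverse (real (Suc n)))"
      by (simp add: dist_norm real_le_rsqrt)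
    also have "\<dots> \<le> \<epsilon> m + \<epsilon> n"
      unfolding \<epsilon>_def by (rule sqrt_add_le_add_sqrt) simp_all
    finally show ?thesis .
  qed
  moreover have "\<epsilon> \<longlonglongrightarrow> 0"
    unfolding \<epsilon>_def using LIMSEQ_inverse_real_of_nat tendsto_real_sqrt tendsto_mult_right_zero
    by fastforce
  ultimately obtain x0 where lim: "x \<longlonglongrightarrow> x0"
    using Cauchy_if_dist_le Cauchy_convergent_iff convergent_def by blast
  have "x0 \<in> S"
    using \<open>closed S\<close> x_in lim by (auto simp: closed_sequential_limits)
  have "(\<lambda>n. (norm (x n))\<^sup>2) \<longlonglongrightarrow> (norm x0)\<^sup>2"
    using lim by (intro tendsto_intros)
  moreover have "(\<lambda>n. D + inverse (real (Suc n))) \<longlonglongrightarrow> D"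
    using tendsto_add[OF tendsto_const LIMSEQ_inverse_real_of_nat] by simp
  ultimately have "(norm x0)\<^sup>2 \<le> D"
    using x_small by (intro LIMSEQ_le) (auto intro: less_imp_le)
  then have "norm x0 \<le> norm y" if "y \<in> S" for y
    using D_le[OF that] by (meson order_trans power2_le_imp_le norm_ge_zero)
  with \<open>x0 \<in> S\<close> show ?thesis using that by blast
qed

lemma quadratic_nonneg_imp_linear_coeff_zero:
  fixes a b :: real
  assumes "b \<ge> 0" and "\<And>t. 0 \<le> 2 * a * t + b * t\<^sup>2"
  shows "a = 0"
proof -
  define s where "s = inverse (b + 1)"
  have "s > 0" and "b * s < 1"
    using \<open>b \<ge> 0\<close> by (simp_all add: s_def field_simps)
  have "0 \<le> 2 * a * (- a * s) + b * (- a * s)\<^sup>2"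
    by (rule assms(2))
  also have "\<dots> = a\<^sup>2 * s * (b * s - 2)"
    by (simp add: power2_eq_square algebra_simps)
  finally have "0 \<le> a\<^sup>2 * (s * (b * s - 2))"
    by (simp add: mult.assoc)
  then show ?thesis
    using \<open>s > 0\<close> \<open>b * s < 1\<close> by (auto simp: zero_le_mult_iff)
qed

text \<open>A minimal-norm vector \<open>x0\<close> of the hyperplane \<open>g = 1\<close> is orthogonal to the kernel
  of \<open>g\<close>, so \<open>x0 / \<parallel>x0\<parallel>\<^sup>2\<close> represents \<open>g\<close>.\<close>
lemma Riesz_representation_real:
  fixes g :: "'a::{real_inner, complete_space} \<Rightarrow> real"
  assumes "bounded_linear g"
  obtains z where "\<And>x. g x = inner x z"
proof (cases "\<forall>x. g x = 0")
  case True
  then show ?thesis using that[of 0] by simp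
next
  case False
  interpret g: bounded_linear g by fact
  obtain w where "g w \<noteq> 0" using False by auto
  define H where "H = {x. g x = 1}"
  have "closed H"
    unfolding H_def by (intro closed_Collect_eq continuous_intros g.continuous_on)
  moreover have "convex H"
    by (auto simp: H_def convex_def g.add g.scaleR algebra_simps)
  moreover have "g ((1 / g w) *\<^sub>R w) = 1"
    using \<open>g w \<noteq> 0\<close> by (simp add: g.scaleR)
  then have "H \<noteq> {}" by (auto simp: H_def)
  ultimately obtain x0 where "x0 \<in> H" and x0_min: "\<And>y. y \<in> H \<Longrightarrow> norm x0 \<le> norm y"
    using closed_convex_has_min_norm by blast
  then have "g x0 = 1" by (simp add: H_def)
  have orth: "inner x0 v = 0" if "g v = 0" for v
  proof (rule quadratic_nonneg_imp_linear_coeff_zero)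
    show "0 \<le> (norm v)\<^sup>2" by simp
    fix t
    have "x0 + t *\<^sub>R v \<in> H"
      using \<open>g x0 = 1\<close> \<open>g v = 0\<close> by (simp add: H_def g.add g.scaleR)
    then have "(norm x0)\<^sup>2 \<le> (norm (x0 + t *\<^sub>R v))\<^sup>2"
      using x0_min by (simp add: power_mono)
    also have "\<dots> = (norm x0)\<^sup>2 + (2 * inner x0 v * t + (norm v)\<^sup>2 * t\<^sup>2)"
      by (simp add: power2_norm_eq_inner inner_commute power2_eq_square[of t] algebra_simps)
    finally show "0 \<le> 2 * inner x0 v * t + (norm v)\<^sup>2 * t\<^sup>2"
      by simp
  qed
  show ?thesis
  proof (rule that)
    fix y
    have "g (y - g y *\<^sub>R x0) = 0"
      using \<open>g x0 = 1\<close> by (simp add: g.diff g.scaleR)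
    then have "inner x0 (y - g y *\<^sub>R x0) = 0"
      by (rule orth)
    then have "inner x0 y = g y * (norm x0)\<^sup>2"
      by (simp add: inner_diff_right power2_norm_eq_inner)
    moreover have "x0 \<noteq> 0"
      using \<open>g x0 = 1\<close> by auto
    ultimately show "g y = inner y ((1 / (norm x0)\<^sup>2) *\<^sub>R x0)"
      by (simp add: inner_commute field_simps)
  qed
qed

section \<open>The adjoint\<close>

lemma adj_exists:
  fixes A :: "'a::{cinner_space, complete_space} \<Rightarrow> 'a"
  assumes "cbounded A"
  shows "\<exists>S. \<forall>x y. cinner (A x) y = cinner x (S y)"
proof -
  have "bounded_linear A" and A_scaleC: "\<And>c x. A (scaleC c x) = scaleC c (A x)"
    using assms by (auto simp: cbounded_def)
  have "\<exists>z. \<forall>x. cinner (A x) y = cinner x z" for y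
  proof -
    obtain z where z: "\<And>x. inner (A x) y = inner x z"
      using Riesz_representation_real bounded_linear_compose[OF bounded_linear_inner_left
          \<open>bounded_linear A\<close>] by blast
    have "cinner (A x) y = cinner x z" for x
      by (rule cinner_eq_if_inner_eq) (simp_all add: z A_scaleC[symmetric])
    then show ?thesis by blast
  qed
  then show ?thesis
    using choice[of "\<lambda>y z. \<forall>x. cinner (A x) y = cinner x z"] by blast
qed

lemma cinner_adj:
  fixes A :: "'a::{cinner_space, complete_space} \<Rightarrow> 'a"
  assumes "cbounded A"
  shows "cinner (A x) y = cinner x (adj A y)"
proof -
  obtain S where S: "\<forall>x y. cinner (A x) y = cinner x (S y)"
    using adj_exists[OF assms] by blast
  have "adj A = S"
    unfolding adj_def
  proof (rule the_equality)
    fix S' assume "\<forall>x y. cinner (A x) y = cinner x (S' y)"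
    then have "inner x (S' y) = inner x (S y)" for x y
      using S by (simp add: inner_cinner)
    then show "S' = S"
      by (metis ext vector_eq_ldot)
  qed (rule S)
  with S show ?thesis by simp
qed

lemma inner_adj:
  fixes A :: "'a::{cinner_space, complete_space} \<Rightarrow> 'a"
  assumes "cbounded A"
  shows "inner (A x) y = inner x (adj A y)"
  using cinner_adj[OF assms] by (simp add: inner_cinner)

lemma bounded_linear_adj:
  fixes A :: "'a::{cinner_space, complete_space} \<Rightarrow> 'a"
  assumes "cbounded A"
  shows "bounded_linear (adj A)"
proof (rule bounded_linear_intro[where K = "onorm A"])
  have A: "bounded_linear A" using assms by (simp add: cbounded_def)
  note adj = inner_adj[OF assms, symmetric]
  show "adj A (y + z) = adj A y + adj A z" for y z
    by (metis vector_eq_ldot adj inner_add_right)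
  show "adj A (r *\<^sub>R y) = r *\<^sub>R adj A y" for r y
    by (metis vector_eq_ldot adj inner_scaleR_right)
  show "norm (adj A y) \<le> norm y * onorm A" for y
  proof -
    have "(norm (adj A y))\<^sup>2 = inner (A (adj A y)) y"
      by (simp add: adj power2_norm_eq_inner)
    also have "\<dots> \<le> norm (A (adj A y)) * norm y"
      by (rule norm_cauchy_schwarz)
    also have "\<dots> \<le> (onorm A * norm (adj A y)) * norm y"
      by (rule mult_right_mono[OF onorm[OF A]]) simp
    also have "\<dots> = norm (adj A y) * (norm y * onorm A)"
      by (simp add: algebra_simps)
    finally have "norm (adj A y) * norm (adj A y) \<le> norm (adj A y) * (norm y * onorm A)"
      by (simp add: power2_eq_square)
    then show ?thesis
      using onorm_pos_le[OF A] by (cases "adj A y = 0") (auto simp: mult_le_cancel_left_pos)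
  qed
qed

lemma bdd_above_numerical_range:
  fixes T :: "'a::cinner_space \<Rightarrow> 'a"
  assumes "bounded_linear T"
  shows "bdd_above (insert 0 {cmod (cinner (T x) x) | x. norm x = 1})"
proof (rule bdd_aboveI[where M = "onorm T"])
  have "cmod (cinner (T x) x) \<le> onorm T" if "norm x = 1" for x
    using cinner_Cauchy_Schwarz[of "T x" x] onorm[OF assms, of x] that by simp
  then show "q \<le> onorm T" if "q \<in> insert 0 {cmod (cinner (T x) x) | x. norm x = 1}" for q
    using that onorm_pos_le[OF assms] by blast
qed

lemma nrad_nonneg:
  fixes T :: "'a::cinner_space \<Rightarrow> 'a"
  assumes "bounded_linear T"
  shows "0 \<le> nrad T"
  unfolding nrad_def by (rule cSup_upper[OF _ bdd_above_numerical_range[OF assms]]) simp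

lemma cmod_cinner_le_nrad:
  fixes T :: "'a::cinner_space \<Rightarrow> 'a"
  assumes "bounded_linear T" and "norm x = 1"
  shows "cmod (cinner (T x) x) \<le> nrad T"
  unfolding nrad_def using assms(2)
  by (intro cSup_upper[OF _ bdd_above_numerical_range[OF assms(1)]]) auto

lemma nrad_le:
  fixes T :: "'a::cinner_space \<Rightarrow> 'a"
  assumes "0 \<le> r" and "\<And>x. norm x = 1 \<Longrightarrow> cmod (cinner (T x) x) \<le> r"
  shows "nrad T \<le> r"
  unfolding nrad_def using assms by (intro cSup_least) auto

lemma inner_le_onorm:
  assumes "bounded_linear T" and "norm x = 1"
  shows "inner (T x) x \<le> onorm T"
  using norm_cauchy_schwarz[of "T x" x] onorm[OF assms(1), of x] assms(2) by simp

section \<open>The numerical radius estimate\<close>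

lemma cmod_cinner_sq_le_adjoint:
  fixes A S :: "'a::cinner_space \<Rightarrow> 'a"
  assumes adjoint: "\<And>x y. cinner (A x) y = cinner x (S y)" and "norm x = 1"
  shows "2 * (cmod (cinner (A x) x))\<^sup>2 \<le> norm (A x) * norm (S x) + cmod (cinner (A (A x)) x)"
proof -
  define c where "c = cinner (A x) x"
  define u where "u = scaleC (2 * c) x - A x"
  have "cinner u u = cnj (2 * c) * (2 * c * cinner x x - cinner (A x) x)
      - (2 * c * cinner x (A x) - cinner (A x) (A x))"
    unfolding u_def by (simp only: cinner_diff_left cinner_diff_right cinner_scaleC_left
        cinner_scaleC_right)
  also have "\<dots> = cinner (A x) (A x)"
    using \<open>norm x = 1\<close> cinner_commute[of x "A x"]
    by (simp add: cinner_self c_def algebra_simps)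
  finally have "(norm u)\<^sup>2 = (norm (A x))\<^sup>2"
    by (simp add: power2_norm_eq_inner inner_cinner)
  then have "norm u = norm (A x)"
    by simp
  have "cinner u (S x) = 2 * c * cinner x (S x) - cinner (A x) (S x)"
    by (simp only: u_def cinner_diff_left cinner_scaleC_left)
  also have "\<dots> = 2 * c * c - cinner (A (A x)) x"
    by (simp add: adjoint[symmetric] c_def)
  finally have "cmod (2 * c * c - cinner (A (A x)) x) \<le> norm (A x) * norm (S x)"
    using cinner_Cauchy_Schwarz[of u "S x"] \<open>norm u = norm (A x)\<close> by simp
  moreover have "cmod (2 * c * c) = 2 * (cmod c)\<^sup>2"
    by (simp add: norm_mult power2_eq_square)
  ultimately show ?thesis
    using norm_triangle_ineq[of "2 * c * c - cinner (A (A x)) x" "cinner (A (A x)) x"]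
    by (simp add: c_def)
qed

lemma cmod_cinner_sq_le_quadratic_forms:
  fixes A S :: "'a::cinner_space \<Rightarrow> 'a"
  assumes adjoint: "\<And>x y. cinner (A x) y = cinner x (S y)"
    and "norm x = 1" and "0 \<le> \<mu>" and "\<mu> \<le> 2"
  shows "(cmod (cinner (A x) x))\<^sup>2 \<le>
      1/4 * inner (\<mu> *\<^sub>R S (A x) + (2 - \<mu>) *\<^sub>R A (S x)) x
    + 1/8 * inner (S (A x) + A (S x)) x
    + 1/4 * cmod (cinner (A (A x)) x)"
proof -
  define p where "p = cmod (cinner (A x) x)"
  define a where "a = norm (A x)"
  define b where "b = norm (S x)"
  have "inner (S (A x)) x = a\<^sup>2"
    using cinner_commute[of "S (A x)" x]
    by (simp add: a_def inner_cinner adjoint[symmetric] cinner_self)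
  moreover have "inner (A (S x)) x = b\<^sup>2"
    by (simp add: b_def adjoint inner_cinner cinner_self)
  ultimately have forms:
    "inner (\<mu> *\<^sub>R S (A x) + (2 - \<mu>) *\<^sub>R A (S x)) x = \<mu> * a\<^sup>2 + (2 - \<mu>) * b\<^sup>2"
    "inner (S (A x) + A (S x)) x = a\<^sup>2 + b\<^sup>2"
    by (simp_all add: inner_add_left)
  have "p \<le> a" "p \<le> b"
    using cinner_Cauchy_Schwarz[of "A x" x] cinner_Cauchy_Schwarz[of x "S x"] \<open>norm x = 1\<close>
    by (simp_all add: p_def a_def b_def adjoint)
  then have "p\<^sup>2 \<le> a\<^sup>2" "p\<^sup>2 \<le> b\<^sup>2"
    by (simp_all add: p_def power_mono)
  then have "\<mu> * p\<^sup>2 + (2 - \<mu>) * p\<^sup>2 \<le> \<mu> * a\<^sup>2 + (2 - \<mu>) * b\<^sup>2"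
    using \<open>0 \<le> \<mu>\<close> \<open>\<mu> \<le> 2\<close> by (intro add_mono mult_left_mono) simp_all
  then have "2 * p\<^sup>2 \<le> \<mu> * a\<^sup>2 + (2 - \<mu>) * b\<^sup>2"
    by (simp add: algebra_simps)
  moreover have "2 * p\<^sup>2 \<le> a * b + cmod (cinner (A (A x)) x)"
    unfolding p_def a_def b_def using adjoint \<open>norm x = 1\<close> by (rule cmod_cinner_sq_le_adjoint)
  moreover have "a * b \<le> (a\<^sup>2 + b\<^sup>2) / 2"
    using sum_squares_ge_zero[of "a - b" 0] by (simp add: power2_eq_square algebra_simps)
  ultimately show ?thesis
    unfolding p_def forms[symmetric] by linarith
qed

theorem mainTheorem4:
  fixes A :: "'a::{cinner_space, complete_space} \<Rightarrow> 'a" and \<mu> :: real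
  assumes "cbounded A" and "0 \<le> \<mu>" and "\<mu> \<le> 2"
  shows "(nrad A)^2 \<le>
      1/4 * onorm (\<lambda>x. \<mu> *\<^sub>R adj A (A x) + (2 - \<mu>) *\<^sub>R A (adj A x))
    + 1/8 * onorm (\<lambda>x. adj A (A x) + A (adj A x))
    + 1/4 * nrad (A \<circ> A)"
    (is "_ \<le> 1/4 * onorm ?T1 + 1/8 * onorm ?T2 + _")
proof -
  have A: "bounded_linear A" and A_adj: "bounded_linear (adj A)"
    using assms(1) bounded_linear_adj by (auto simp: cbounded_def)
  have AA: "bounded_linear (A \<circ> A)"
    unfolding comp_def by (rule bounded_linear_compose[OF A A])
  have AdjA: "bounded_linear (\<lambda>x. adj A (A x))"
    by (rule bounded_linear_compose[OF A_adj A])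
  have AAdj: "bounded_linear (\<lambda>x. A (adj A x))"
    by (rule bounded_linear_compose[OF A A_adj])
  have T: "bounded_linear ?T1" "bounded_linear ?T2"
    by (intro bounded_linear_add bounded_linear_const_scaleR AdjA AAdj)+
  define R where "R = 1/4 * onorm ?T1 + 1/8 * onorm ?T2 + 1/4 * nrad (A \<circ> A)"
  have "0 \<le> R"
    using onorm_pos_le[OF T(1)] onorm_pos_le[OF T(2)] nrad_nonneg[OF AA] by (simp add: R_def)
  have "(cmod (cinner (A x) x))\<^sup>2 \<le> R" if "norm x = 1" for x
  proof -
    have "inner (?T1 x) x \<le> onorm ?T1" "inner (?T2 x) x \<le> onorm ?T2"
      by (rule inner_le_onorm[OF T(1) that], rule inner_le_onorm[OF T(2) that])
    moreover have "cmod (cinner (A (A x)) x) \<le> nrad (A \<circ> A)"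
      using cmod_cinner_le_nrad[OF AA that] by simp
    ultimately show ?thesis
      using cmod_cinner_sq_le_quadratic_forms[OF cinner_adj[OF assms(1)] that assms(2,3)]
      unfolding R_def by linarith
  qed
  then have "nrad A \<le> sqrt R"
    using \<open>0 \<le> R\<close> by (intro nrad_le) (auto simp: real_le_rsqrt)
  then have "(nrad A)\<^sup>2 \<le> (sqrt R)\<^sup>2"
    by (rule power_mono[OF _ nrad_nonneg[OF A]])
  then show ?thesis
    using \<open>0 \<le> R\<close> by (simp add: R_def)
qed

end
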